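(* Let $p$ be a prime and $n\ge1$. There are only countably many subgroups $V$ of $\mathcal{L}_{n,p}$ with $\pi_1(V)>0$.
   Context: $\mathcal{L}_{n,p}=\left(\bigoplus_{\mathbb{Z}}(\mathbb{Z}/p\mathbb{Z})^n\right)\rtimes\mathbb{Z}$. For a subgroup $V\le\mathcal{L}_{n,p}$, $\pi_1(V)\in\{0,1,2,\dots\}$ is defined by: the image of $V$ under the projection $\mathcal{L}_{n,p}\to\mathbb{Z}$ is $\pi_1(V)\mathbb{Z}$. *)

theory Defs
  imports "HOL-Algebra.Group" "HOL-Library.Countable_Set" "HOL-Computational_Algebra.Primes"
begin

text \<open>Concrete model of L_{n,p} = (direct sum over Z of (Z/pZ)^n) semidirect Z.
  An element is a pair (f, m): f k is the lamp configuration at site k, an element of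
  (Z/pZ)^n encoded as a function nat => int with values in {0..<p} at coordinates i < n
  and 0 at coordinates i >= n; f must be finitely supported; m is in Z.\<close>

type_synonym lamp_elem = "(int \<Rightarrow> nat \<Rightarrow> int) \<times> int"

definition lamp_carrier :: "nat \<Rightarrow> nat \<Rightarrow> lamp_elem set" where
  "lamp_carrier n p = {(f, m). (\<forall>k i. 0 \<le> f k i \<and> f k i < int p)
                              \<and> (\<forall>k i. n \<le> i \<longrightarrow> f k i = 0)
                              \<and> finite {k. f k \<noteq> (\<lambda>i. 0)}}"

definition lamp_mult :: "nat \<Rightarrow> lamp_elem \<Rightarrow> lamp_elem \<Rightarrow> lamp_elem" where
  "lamp_mult p x y = ((\<lambda>k i. (fst x k i + fst y (k - snd x) i) mod int p), snd x + snd y)"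

definition lamplighter :: "nat \<Rightarrow> nat \<Rightarrow> lamp_elem monoid" where
  "lamplighter n p = \<lparr> carrier = lamp_carrier n p, monoid.mult = lamp_mult p,
                        monoid.one = ((\<lambda>k i. 0), 0) \<rparr>"

definition pi1 :: "lamp_elem set \<Rightarrow> nat" where
  "pi1 V = (THE d::nat. snd ` V = {int d * k | k. True})"

end

theory Submission
  imports Defs "HOL-Algebra.Elementary_Groups"
begin

text \<open>Let V be a subgroup with pi1 V = d > 0 and pick h \<in> V lying over d.
  Then V is generated by h together with its lamp part K = {f. (f, 0) \<in> V}, and
  conjugation by h translates lamps by d, so K is a module over
  F_p[t^d, t^-d]. Such a module is finitely generated, by the argument of Hilbert's basis
  theorem: the top blocks of width d of the elements of K supported in [0, d(m+1))
  form an ascending chain in a finite set, and once it stabilises, the finitely many elements of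
  K supported in the stable range generate K. Hence every such V is generated by
  a finite subset of the countable group L_{n,p}.\<close>

definition lamp_configs :: "nat \<Rightarrow> nat \<Rightarrow> (int \<Rightarrow> nat \<Rightarrow> int) set" where
  "lamp_configs n p = {f. (\<forall>k i. 0 \<le> f k i \<and> f k i < int p) \<and> (\<forall>k i. n \<le> i \<longrightarrow> f k i = 0)
                         \<and> finite {k. f k \<noteq> (\<lambda>i. 0)}}"

definition lamp_add :: "nat \<Rightarrow> (int \<Rightarrow> nat \<Rightarrow> int) \<Rightarrow> (int \<Rightarrow> nat \<Rightarrow> int) \<Rightarrow> int \<Rightarrow> nat \<Rightarrow> int" where
  "lamp_add p f g = (\<lambda>k i. (f k i + g k i) mod int p)"

definition lamp_neg :: "nat \<Rightarrow> (int \<Rightarrow> nat \<Rightarrow> int) \<Rightarrow> int \<Rightarrow> nat \<Rightarrow> int" where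
  "lamp_neg p f = (\<lambda>k i. (- f k i) mod int p)"

definition lamp_shift :: "int \<Rightarrow> (int \<Rightarrow> nat \<Rightarrow> int) \<Rightarrow> int \<Rightarrow> nat \<Rightarrow> int" where
  "lamp_shift a f = (\<lambda>k i. f (k - a) i)"

lemma carrier_lamplighter: "carrier (lamplighter n p) = lamp_configs n p \<times> UNIV"
  by (auto simp: lamplighter_def lamp_carrier_def lamp_configs_def)

lemma one_lamplighter: "\<one>\<^bsub>lamplighter n p\<^esub> = ((\<lambda>k i. 0), 0)"
  by (simp add: lamplighter_def)

lemma mult_lamplighter:
  "(f, a) \<otimes>\<^bsub>lamplighter n p\<^esub> (g, b) = (lamp_add p f (lamp_shift a g), a + b)"
  by (simp add: lamplighter_def lamp_mult_def lamp_add_def lamp_shift_def)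

lemma lamp_configs_range: "f \<in> lamp_configs n p \<Longrightarrow> 0 \<le> f k i \<and> f k i < int p"
  by (simp add: lamp_configs_def)

lemma lamp_configs_imp_pos: "f \<in> lamp_configs n p \<Longrightarrow> 0 < p"
  using lamp_configs_range[of f n p 0 0] by linarith

lemma lamp_configs_mod [simp]: "f \<in> lamp_configs n p \<Longrightarrow> f k i mod int p = f k i"
  by (simp add: lamp_configs_range)

lemma lamp_shift_0 [simp]: "lamp_shift 0 f = f"
  by (simp add: lamp_shift_def)

lemma lamp_shift_shift [simp]: "lamp_shift a (lamp_shift b f) = lamp_shift (a + b) f"
  by (simp add: lamp_shift_def diff_diff_eq add.commute)

lemma lamp_shift_closed:
  assumes f: "f \<in> lamp_configs n p"
  shows "lamp_shift a f \<in> lamp_configs n p"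
proof -
  have "{k. lamp_shift a f k \<noteq> (\<lambda>i. 0)} = (\<lambda>k. k + a) ` {k. f k \<noteq> (\<lambda>i. 0)}"
    by (force simp: lamp_shift_def image_iff)
  then show ?thesis
    using f by (simp add: lamp_configs_def lamp_shift_def)
qed

lemma lamp_add_closed:
  assumes f: "f \<in> lamp_configs n p" and g: "g \<in> lamp_configs n p"
  shows "lamp_add p f g \<in> lamp_configs n p"
proof -
  have "{k. lamp_add p f g k \<noteq> (\<lambda>i. 0)} \<subseteq> {k. f k \<noteq> (\<lambda>i. 0)} \<union> {k. g k \<noteq> (\<lambda>i. 0)}"
    by (auto simp: lamp_add_def)
  then show ?thesis
    using f g lamp_configs_imp_pos[OF f]
    by (auto simp: lamp_configs_def lamp_add_def intro: finite_subset)
qed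

lemma lamp_neg_closed:
  assumes f: "f \<in> lamp_configs n p"
  shows "lamp_neg p f \<in> lamp_configs n p"
proof -
  have "{k. lamp_neg p f k \<noteq> (\<lambda>i. 0)} \<subseteq> {k. f k \<noteq> (\<lambda>i. 0)}"
    by (auto simp: lamp_neg_def)
  then show ?thesis
    using f lamp_configs_imp_pos[OF f]
    by (auto simp: lamp_configs_def lamp_neg_def intro: finite_subset)
qed

lemma group_lamplighter:
  assumes "p > 0"
  shows "group (lamplighter n p)"
proof (rule groupI)
  show "\<one>\<^bsub>lamplighter n p\<^esub> \<in> carrier (lamplighter n p)"
    using assms by (simp add: carrier_lamplighter one_lamplighter lamp_configs_def)
next
  fix x y assume "x \<in> carrier (lamplighter n p)" "y \<in> carrier (lamplighter n p)"
  then show "x \<otimes>\<^bsub>lamplighter n p\<^esub> y \<in> carrier (lamplighter n p)"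
    by (cases x, cases y) (simp add: carrier_lamplighter mult_lamplighter lamp_add_closed lamp_shift_closed)
next
  fix x y z
  show "x \<otimes>\<^bsub>lamplighter n p\<^esub> y \<otimes>\<^bsub>lamplighter n p\<^esub> z =
        x \<otimes>\<^bsub>lamplighter n p\<^esub> (y \<otimes>\<^bsub>lamplighter n p\<^esub> z)"
    by (cases x, cases y, cases z)
       (simp add: mult_lamplighter lamp_add_def lamp_shift_def mod_simps diff_diff_eq add.assoc)
next
  fix x assume "x \<in> carrier (lamplighter n p)"
  then show "\<one>\<^bsub>lamplighter n p\<^esub> \<otimes>\<^bsub>lamplighter n p\<^esub> x = x"
    by (cases x) (simp add: carrier_lamplighter one_lamplighter mult_lamplighter lamp_add_def lamp_shift_def)
next
  fix x assume "x \<in> carrier (lamplighter n p)"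
  then obtain f a where x: "x = (f, a)" and f: "f \<in> lamp_configs n p"
    by (auto simp: carrier_lamplighter)
  have "(lamp_neg p (lamp_shift (- a) f), - a) \<in> carrier (lamplighter n p)"
    by (simp add: f carrier_lamplighter lamp_neg_closed lamp_shift_closed)
  moreover have "(lamp_neg p (lamp_shift (- a) f), - a) \<otimes>\<^bsub>lamplighter n p\<^esub> x = \<one>\<^bsub>lamplighter n p\<^esub>"
    by (simp add: x mult_lamplighter one_lamplighter lamp_add_def lamp_neg_def lamp_shift_def mod_simps)
  ultimately show "\<exists>y\<in>carrier (lamplighter n p). y \<otimes>\<^bsub>lamplighter n p\<^esub> x = \<one>\<^bsub>lamplighter n p\<^esub>" ..
qed

lemma inv_lamplighter:
  assumes "f \<in> lamp_configs n p"
  shows "inv\<^bsub>lamplighter n p\<^esub> (f, a) = (lamp_neg p (lamp_shift (- a) f), - a)"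
proof -
  have "p > 0"
    by (rule lamp_configs_imp_pos[OF assms])
  then interpret group "lamplighter n p" by (rule group_lamplighter)
  show ?thesis
    by (rule inv_equality)
       (simp_all add: assms carrier_lamplighter lamp_neg_closed lamp_shift_closed,
        simp add: mult_lamplighter one_lamplighter lamp_add_def lamp_neg_def lamp_shift_def mod_simps)
qed

lemma snd_hom_lamplighter: "snd \<in> hom (lamplighter n p) integer_group"
  by (rule homI) (auto simp: mult_lamplighter)

lemma snd_int_pow_lamplighter:
  assumes "p > 0" and "x \<in> carrier (lamplighter n p)"
  shows "snd (x [^]\<^bsub>lamplighter n p\<^esub> (k::int)) = k * snd x"
  using hom_int_pow[OF snd_hom_lamplighter assms(2) group_lamplighter[OF assms(1)] group_integer_group]
  by simp

lemma subgroup_integer_group_multiples: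
  assumes S: "subgroup S integer_group"
  shows "\<exists>d::nat. S = {int d * k | k. True}"
proof (cases "S \<subseteq> {0}")
  case True
  then have "S = {0}"
    using subgroup.one_closed[OF S] by auto
  then show ?thesis
    by (intro exI[of _ 0]) simp
next
  case False
  have multiples: "k * x \<in> S" if "x \<in> S" for x k
    using group.subgroup_int_pow_closed[OF group_integer_group S that, of k] by simp
  define P where "P m \<longleftrightarrow> 0 < m \<and> int m \<in> S" for m
  obtain x where "x \<in> S" "x \<noteq> 0"
    using False by auto
  then have "P (nat \<bar>x\<bar>)"
    using multiples[of x "sgn x"] by (auto simp: P_def abs_if)
  then have "P (Least P)"
    by (rule LeastI)
  define d where "d = Least P"
  have d: "0 < d" "int d \<in> S"
    using \<open>P (Least P)\<close> by (simp_all add: P_def d_def)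
  have "s \<in> {int d * k | k. True}" if s: "s \<in> S" for s
  proof -
    have "s mod int d = s + (- (s div int d)) * int d"
      by (simp add: minus_div_mult_eq_mod[symmetric])
    also have "\<dots> \<in> S"
      using subgroup.m_closed[OF S s multiples[OF d(2), of "- (s div int d)"]] by simp
    finally have "s mod int d \<in> S" .
    moreover have "0 \<le> s mod int d" "s mod int d < int d"
      using d(1) by simp_all
    moreover have "\<not> P (nat (s mod int d))"
      using Least_le[of P "nat (s mod int d)", folded d_def] \<open>0 \<le> s mod int d\<close> \<open>s mod int d < int d\<close>
      by (metis nat_less_iff not_le)
    ultimately have "int d dvd s"
      by (auto simp: P_def dvd_eq_mod_eq_0)
    then show ?thesis
      unfolding dvd_def by blast
  qed
  moreover have "int d * k \<in> S" for k
    using multiples[OF d(2)] by (simp add: mult.commute)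
  ultimately show ?thesis
    by blast
qed

lemma int_multiples_eq_imp_eq:
  assumes "{int d * k | k. True} = {int d' * k | k. True}"
  shows "d = d'"
proof -
  have "int d \<in> {int d' * k | k. True}" "int d' \<in> {int d * k | k. True}"
    by (simp_all add: assms) (use assms in \<open>auto intro: exI[of _ 1]\<close>)
  then have "int d' dvd int d" "int d dvd int d'"
    unfolding dvd_def by blast+
  then show ?thesis
    by (simp add: dvd_antisym)
qed

lemma image_snd_subgroup_lamplighter:
  assumes "p > 0" and V: "subgroup V (lamplighter n p)"
  shows "snd ` V = {int (pi1 V) * k | k. True}"
proof -
  have "group_hom (lamplighter n p) integer_group snd"
    using group_lamplighter[OF assms(1)] snd_hom_lamplighter
    by (simp add: group_hom_def group_hom_axioms_def)
  then have "subgroup (snd ` V) integer_group"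
    using V by (rule group_hom.subgroup_img_is_subgroup)
  then obtain d :: nat where d: "snd ` V = {int d * k | k. True}"
    using subgroup_integer_group_multiples by blast
  then have "pi1 V = d"
    unfolding pi1_def by (rule the_equality) (use d int_multiples_eq_imp_eq in simp)
  then show ?thesis
    using d by simp
qed

definition lamps_of :: "lamp_elem set \<Rightarrow> (int \<Rightarrow> nat \<Rightarrow> int) set" where
  "lamps_of V = {f. (f, 0) \<in> V}"

text \<open>A module over F_p[t^d, t^-d] inside the lamp group, t acting by translation.\<close>

definition lamp_submodule :: "nat \<Rightarrow> int \<Rightarrow> (int \<Rightarrow> nat \<Rightarrow> int) set \<Rightarrow> bool" where
  "lamp_submodule p d K \<longleftrightarrow>
     (\<forall>f\<in>K. \<forall>g\<in>K. lamp_add p f g \<in> K) \<and> (\<forall>f\<in>K. lamp_neg p f \<in> K)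
     \<and> (\<forall>f\<in>K. lamp_shift d f \<in> K \<and> lamp_shift (- d) f \<in> K)"

lemma conj_lamplighter:
  assumes "x \<in> carrier (lamplighter n p)" and "f \<in> lamp_configs n p"
  shows "x \<otimes>\<^bsub>lamplighter n p\<^esub> (f, 0) \<otimes>\<^bsub>lamplighter n p\<^esub> inv\<^bsub>lamplighter n p\<^esub> x
         = (lamp_shift (snd x) f, 0)"
proof -
  obtain h a where x: "x = (h, a)" and h: "h \<in> lamp_configs n p"
    using assms(1) by (auto simp: carrier_lamplighter)
  show ?thesis
    using assms(2)
    by (simp add: x inv_lamplighter[OF h] mult_lamplighter lamp_add_def lamp_neg_def lamp_shift_def
        mod_simps)
qed

lemma snd_inv_lamplighter:
  "x \<in> carrier (lamplighter n p) \<Longrightarrow> snd (inv\<^bsub>lamplighter n p\<^esub> x) = - snd x"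
  by (auto simp: carrier_lamplighter inv_lamplighter)

lemma lamp_submodule_lamps_of:
  assumes "p > 0" and W: "subgroup W (lamplighter n p)" and x: "x \<in> W" "snd x = d"
  shows "lamp_submodule p d (lamps_of W)"
  unfolding lamp_submodule_def
proof (intro conjI ballI)
  interpret group "lamplighter n p" by (rule group_lamplighter[OF assms(1)])
  have configs: "f \<in> lamp_configs n p" if "f \<in> lamps_of W" for f
    using that subgroup.subset[OF W] by (auto simp: lamps_of_def carrier_lamplighter)
  have xc: "x \<in> carrier (lamplighter n p)" and xic: "inv\<^bsub>lamplighter n p\<^esub> x \<in> carrier (lamplighter n p)"
    using x subgroup.subset[OF W] by auto
  fix f assume f: "f \<in> lamps_of W"
  then have fW: "(f, 0) \<in> W"
    by (simp add: lamps_of_def)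
  {
    fix g assume "g \<in> lamps_of W"
    then have "(f, 0) \<otimes>\<^bsub>lamplighter n p\<^esub> (g, 0) \<in> W"
      using fW by (simp add: lamps_of_def subgroup.m_closed[OF W])
    then show "lamp_add p f g \<in> lamps_of W"
      by (simp add: lamps_of_def mult_lamplighter)
  }
  show "lamp_neg p f \<in> lamps_of W"
    using subgroup.m_inv_closed[OF W fW] by (simp add: lamps_of_def inv_lamplighter[OF configs[OF f]])
  show "lamp_shift d f \<in> lamps_of W"
    using subgroup.m_closed[OF W subgroup.m_closed[OF W x(1) fW] subgroup.m_inv_closed[OF W x(1)]]
    by (simp add: lamps_of_def conj_lamplighter[OF xc configs[OF f]] x(2))
  have "inv\<^bsub>lamplighter n p\<^esub> x \<otimes>\<^bsub>lamplighter n p\<^esub> (f, 0) \<otimes>\<^bsub>lamplighter n p\<^esub> x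
        = (lamp_shift (- d) f, 0)"
    using conj_lamplighter[OF xic configs[OF f]] by (simp add: xc snd_inv_lamplighter x(2))
  then show "lamp_shift (- d) f \<in> lamps_of W"
    using subgroup.m_closed[OF W subgroup.m_closed[OF W subgroup.m_inv_closed[OF W x(1)] fW] x(1)]
    by (simp add: lamps_of_def)
qed

lemma snd_mult_lamplighter: "snd (x \<otimes>\<^bsub>lamplighter n p\<^esub> y) = snd x + snd y"
  by (cases x, cases y) (simp add: mult_lamplighter)

lemma subgroup_lamplighter_subsetI:
  assumes "p > 0" and V: "subgroup V (lamplighter n p)" and W: "subgroup W (lamplighter n p)"
    and h: "h \<in> V" "h \<in> W" "snd h = int (pi1 V)" and lamps: "lamps_of V \<subseteq> lamps_of W"
  shows "V \<subseteq> W"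
proof
  interpret group "lamplighter n p" by (rule group_lamplighter[OF assms(1)])
  fix x assume x: "x \<in> V"
  obtain k where k: "snd x = int (pi1 V) * k"
    using image_snd_subgroup_lamplighter[OF assms(1) V] x by (auto simp: set_eq_iff)
  define hk where "hk = h [^]\<^bsub>lamplighter n p\<^esub> k"
  define y where "y = x \<otimes>\<^bsub>lamplighter n p\<^esub> inv\<^bsub>lamplighter n p\<^esub> hk"
  have hk: "hk \<in> V" "hk \<in> W" "hk \<in> carrier (lamplighter n p)"
    using h subgroup_int_pow_closed[OF V] subgroup_int_pow_closed[OF W] subgroup.subset[OF V]
    by (auto simp: hk_def)
  have "y \<in> V"
    using x hk by (simp add: y_def subgroup.m_closed[OF V] subgroup.m_inv_closed[OF V])
  moreover have "snd hk = snd x"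
    using k h subgroup.subset[OF V] by (auto simp: hk_def snd_int_pow_lamplighter[OF assms(1)])
  then have "snd y = 0"
    using hk(3) by (simp add: y_def snd_mult_lamplighter snd_inv_lamplighter)
  ultimately have "y \<in> W"
    using lamps by (metis (mono_tags) lamps_of_def mem_Collect_eq prod.collapse subsetD)
  moreover have "x = y \<otimes>\<^bsub>lamplighter n p\<^esub> hk"
    using x hk(3) subgroup.subset[OF V] by (auto simp: y_def m_assoc)
  ultimately show "x \<in> W"
    using hk(2) by (simp add: subgroup.m_closed[OF W])
qed

definition supported_below :: "int \<Rightarrow> (int \<Rightarrow> nat \<Rightarrow> int) \<Rightarrow> bool" where
  "supported_below b f \<longleftrightarrow> (\<forall>k i. f k i \<noteq> 0 \<longrightarrow> 0 \<le> k \<and> k < b)"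

definition lamp_window :: "nat \<Rightarrow> nat \<Rightarrow> int \<Rightarrow> (int \<Rightarrow> nat \<Rightarrow> int) set" where
  "lamp_window n p b = {f \<in> lamp_configs n p. supported_below b f}"

text \<open>Viewing f as a polynomial in t^d whose coefficients are blocks of width d,
  lamp_block d m f is its coefficient of degree m; leading_blocks d K m collects the
  leading coefficients of the elements of K of degree at most m.\<close>

definition lamp_block :: "int \<Rightarrow> nat \<Rightarrow> (int \<Rightarrow> nat \<Rightarrow> int) \<Rightarrow> int \<Rightarrow> nat \<Rightarrow> int" where
  "lamp_block d m f = (\<lambda>j i. if 0 \<le> j \<and> j < d then f (d * int m + j) i else 0)"

definition leading_blocks :: "int \<Rightarrow> (int \<Rightarrow> nat \<Rightarrow> int) set \<Rightarrow> nat \<Rightarrow> (int \<Rightarrow> nat \<Rightarrow> int) set" where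
  "leading_blocks d K m = lamp_block d m ` {f \<in> K. supported_below (d * int (Suc m)) f}"

lemma supported_below_mono: "supported_below b f \<Longrightarrow> b \<le> b' \<Longrightarrow> supported_below b' f"
  by (fastforce simp: supported_below_def)

lemma supported_below_shift:
  "supported_below b f \<Longrightarrow> 0 \<le> s \<Longrightarrow> supported_below (b + s) (lamp_shift s f)"
  by (fastforce simp: supported_below_def lamp_shift_def)

lemma lamp_block_shift: "lamp_block d (m + t) (lamp_shift (d * int t) f) = lamp_block d m f"
proof -
  have shifted: "d * int (m + t) + j - d * int t = d * int m + j" for j
    by (simp add: algebra_simps)
  show ?thesis
    unfolding lamp_block_def lamp_shift_def by (simp only: shifted)
qed

lemma finite_lamp_window: "finite (lamp_window n p b)"
proof -
  let ?I = "{0..<b} \<times> {..<n}"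
  let ?r = "\<lambda>g. restrict (\<lambda>(k, i). g k i) ?I"
  have vanish: "g k i = 0" if "g \<in> lamp_window n p b" "(k, i) \<notin> ?I" for g k i
    using that by (auto simp: lamp_window_def supported_below_def lamp_configs_def not_less)
  have "inj_on ?r (lamp_window n p b)"
  proof (rule inj_onI, intro ext)
    fix g h k i assume g: "g \<in> lamp_window n p b" and h: "h \<in> lamp_window n p b" and eq: "?r g = ?r h"
    show "g k i = h k i"
      using fun_cong[OF eq, of "(k, i)"] vanish[OF g] vanish[OF h] by (cases "(k, i) \<in> ?I") auto
  qed
  moreover have "?r ` lamp_window n p b \<subseteq> PiE ?I (\<lambda>_. {0..<int p})"
    by (rule image_subsetI, rule PiE_I) (auto simp: lamp_window_def lamp_configs_def)
  then have "finite (?r ` lamp_window n p b)"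
    by (rule finite_subset) (simp add: finite_PiE)
  ultimately show ?thesis
    by (rule finite_imageD[rotated])
qed

lemma lamp_configs_bounded_support:
  assumes "f \<in> lamp_configs n p"
  obtains t :: nat where "\<forall>k i. f k i \<noteq> 0 \<longrightarrow> \<bar>k\<bar> < int t"
proof -
  have "finite {k. f k \<noteq> (\<lambda>i. 0)}"
    using assms by (simp add: lamp_configs_def)
  then obtain b where "abs ` {k. f k \<noteq> (\<lambda>i. 0)} \<subseteq> {..<b}"
    by (auto simp: finite_int_iff_bounded)
  moreover have "\<bar>k\<bar> \<in> abs ` {k. f k \<noteq> (\<lambda>i. 0)}" if "f k i \<noteq> 0" for k i
    using that by auto
  ultimately have "\<bar>k\<bar> < int (nat b)" if "f k i \<noteq> 0" for k i
    using that by fastforce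
  then show ?thesis
    using that by blast
qed

lemma increasing_chain_in_finite_stabilizes:
  fixes L :: "nat \<Rightarrow> 'a set"
  assumes mono: "\<And>m. L m \<subseteq> L (Suc m)" and bounded: "\<And>m. L m \<subseteq> T" and "finite T"
  obtains M where "\<And>m. M \<le> m \<Longrightarrow> L m = L M"
proof -
  have le: "L m \<subseteq> L m'" if "m \<le> m'" for m m'
    using lift_Suc_mono_le[of L, OF mono that] .
  have "finite (\<Union>m. L m)"
    using bounded \<open>finite T\<close> by (meson UN_least finite_subset)
  define first where "first x = (LEAST m. x \<in> L m)" for x
  define M where "M = Max (first ` (\<Union>m. L m))"
  have "L m \<subseteq> L M" for m
  proof
    fix x assume "x \<in> L m"
    then have "x \<in> L (first x)" and "first x \<le> M"
      unfolding first_def M_def using \<open>finite (\<Union>m. L m)\<close> by (auto intro: LeastI Max_ge)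
    then show "x \<in> L M"
      using le by blast
  qed
  then show ?thesis
    using that le by blast
qed

lemma lamp_submodule_shift_mult:
  assumes K: "lamp_submodule p d K" and f: "f \<in> K"
  shows "lamp_shift (d * k) f \<in> K"
proof (induction k rule: int_induct[where k = 0])
  case base
  then show ?case using f by simp
next
  case (step1 i)
  then have "lamp_shift d (lamp_shift (d * i) f) \<in> K"
    using K unfolding lamp_submodule_def by blast
  moreover have "d + d * i = d * (i + 1)"
    by (simp add: algebra_simps)
  ultimately show ?case
    by simp
next
  case (step2 i)
  then have "lamp_shift (- d) (lamp_shift (d * i) f) \<in> K"
    using K unfolding lamp_submodule_def by blast
  moreover have "- d + d * i = d * (i - 1)"
    by (simp add: algebra_simps)
  ultimately show ?case
    by simp
qed

lemma leading_blocks_mono: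
  assumes "lamp_submodule p d K" and "0 \<le> d"
  shows "leading_blocks d K m \<subseteq> leading_blocks d K (Suc m)"
proof
  fix x assume "x \<in> leading_blocks d K m"
  then obtain f where f: "f \<in> K" "supported_below (d * int (Suc m)) f" and x: "x = lamp_block d m f"
    by (auto simp: leading_blocks_def)
  have "lamp_shift d f \<in> K"
    using lamp_submodule_shift_mult[OF assms(1) f(1), of 1] by simp
  moreover have "supported_below (d * int (Suc (Suc m))) (lamp_shift d f)"
    using supported_below_shift[OF f(2) assms(2)] by (simp add: algebra_simps)
  moreover have "lamp_block d (Suc m) (lamp_shift d f) = x"
    using lamp_block_shift[of d m 1 f] by (simp add: x)
  ultimately show "x \<in> leading_blocks d K (Suc m)"
    unfolding leading_blocks_def by blast
qed

lemma leading_blocks_subset_window: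
  assumes "K \<subseteq> lamp_configs n p"
  shows "leading_blocks d K m \<subseteq> lamp_window n p d"
proof
  fix x assume "x \<in> leading_blocks d K m"
  then obtain f where f: "f \<in> lamp_configs n p" and x: "x = lamp_block d m f"
    using assms by (auto simp: leading_blocks_def)
  have "p > 0"
    by (rule lamp_configs_imp_pos[OF f])
  have "{j. x j \<noteq> (\<lambda>i. 0)} \<subseteq> {0..<d}"
    by (auto simp: x lamp_block_def split: if_splits)
  then show "x \<in> lamp_window n p d"
    using f \<open>p > 0\<close> by (auto simp: x lamp_window_def lamp_configs_def supported_below_def lamp_block_def
        intro: finite_subset)
qed

lemma lamp_add_neg_cancel:
  "w \<in> lamp_configs n p \<Longrightarrow> lamp_add p (lamp_add p w (lamp_neg p u)) u = w"
  by (simp add: lamp_add_def lamp_neg_def mod_simps)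

lemma supported_below_diff_same_block:
  assumes w: "supported_below (d * int (Suc m)) w" and u: "supported_below (d * int (Suc m)) u"
    and block: "lamp_block d m u = lamp_block d m w"
  shows "supported_below (d * int m) (lamp_add p w (lamp_neg p u))"
  unfolding supported_below_def
proof (intro allI impI)
  fix k i assume nz: "lamp_add p w (lamp_neg p u) k i \<noteq> 0"
  then have "w k i \<noteq> u k i"
    by (auto simp: lamp_add_def lamp_neg_def mod_simps)
  then consider "w k i \<noteq> 0" | "u k i \<noteq> 0"
    by fastforce
  then have "0 \<le> k \<and> k < d * int (Suc m)"
    using w u by cases (auto simp: supported_below_def)
  then have range: "0 \<le> k" "k < d * int m + d"
    by (simp_all add: algebra_simps)
  show "0 \<le> k \<and> k < d * int m"
  proof (rule ccontr)
    assume "\<not> (0 \<le> k \<and> k < d * int m)"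
    then have "u k i = w k i"
      using fun_cong[OF fun_cong[OF block, of "k - d * int m"], of i] range
      by (simp add: lamp_block_def)
    then show False
      using \<open>w k i \<noteq> u k i\<close> by simp
  qed
qed

lemma leading_block_reduction:
  assumes K: "K \<subseteq> lamp_configs n p" "0 < d" "lamp_submodule p d K"
    and stable: "\<And>m. M \<le> m \<Longrightarrow> leading_blocks d K m = leading_blocks d K M"
    and "M \<le> m" and f: "f \<in> K" "supported_below (d * int (Suc m)) f"
  obtains u where "u \<in> K" "supported_below (d * int (Suc M)) u"
    "supported_below (d * int m) (lamp_add p f (lamp_neg p (lamp_shift (d * int (m - M)) u)))"
proof -
  have "lamp_block d m f \<in> leading_blocks d K M"
    using stable[OF \<open>M \<le> m\<close>] f by (auto simp: leading_blocks_def)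
  then obtain u where u: "u \<in> K" "supported_below (d * int (Suc M)) u"
    and block: "lamp_block d M u = lamp_block d m f"
    by (auto simp: leading_blocks_def)
  have "supported_below (d * int (Suc M) + d * int (m - M)) (lamp_shift (d * int (m - M)) u)"
    using u(2) K(2) by (intro supported_below_shift) auto
  then have "supported_below (d * int (Suc m)) (lamp_shift (d * int (m - M)) u)"
    using \<open>M \<le> m\<close> by (simp add: algebra_simps of_nat_diff)
  moreover have "lamp_block d m (lamp_shift (d * int (m - M)) u) = lamp_block d m f"
    using lamp_block_shift[of d M "m - M" u] block \<open>M \<le> m\<close> by simp
  ultimately show ?thesis
    using that u f(2) supported_below_diff_same_block by blast
qed

lemma lamp_submodule_supported_subset:
  assumes K: "K \<subseteq> lamp_configs n p" "0 < d" "lamp_submodule p d K"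
    and stable: "\<And>m. M \<le> m \<Longrightarrow> leading_blocks d K m = leading_blocks d K M"
    and K': "lamp_submodule p d K'" "{f \<in> K. supported_below (d * int (Suc M)) f} \<subseteq> K'"
  shows "f \<in> K \<Longrightarrow> supported_below (d * int m) f \<Longrightarrow> f \<in> K'"
proof (induction m arbitrary: f)
  case 0
  then show ?case
    using K' K(2) supported_below_mono[of 0 f] by auto
next
  case (Suc m)
  show ?case
  proof (cases "m < M")
    case True
    then have "d * int (Suc m) \<le> d * int (Suc M)"
      using K(2) by simp
    then show ?thesis
      using Suc.prems K'(2) supported_below_mono by blast
  next
    case False
    then obtain u where u: "u \<in> K" "supported_below (d * int (Suc M)) u"
      and reduced: "supported_below (d * int m) (lamp_add p f (lamp_neg p (lamp_shift (d * int (m - M)) u)))"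
      using leading_block_reduction[OF K stable _ Suc.prems] by (metis not_less)
    define u' where "u' = lamp_shift (d * int (m - M)) u"
    have "u' \<in> K" "u' \<in> K'"
      using lamp_submodule_shift_mult K(3) K' u by (auto simp: u'_def)
    then have "lamp_add p f (lamp_neg p u') \<in> K"
      using K(3) Suc.prems(1) by (simp add: lamp_submodule_def)
    then have "lamp_add p f (lamp_neg p u') \<in> K'"
      using reduced by (intro Suc.IH) (simp_all add: u'_def)
    then have "lamp_add p (lamp_add p f (lamp_neg p u')) u' \<in> K'"
      using K'(1) \<open>u' \<in> K'\<close> by (simp add: lamp_submodule_def)
    then show ?thesis
      using K(1) Suc.prems(1) lamp_add_neg_cancel by (metis subsetD)
  qed
qed

lemma supported_below_shift_bounded:
  assumes "\<forall>k i. f k i \<noteq> 0 \<longrightarrow> \<bar>k\<bar> < int t" and "int t \<le> s"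
  shows "supported_below (2 * s) (lamp_shift s f)"
  using assms by (fastforce simp: supported_below_def lamp_shift_def)

lemma lamp_submodule_finitely_generated:
  assumes K: "K \<subseteq> lamp_configs n p" "0 < d" "lamp_submodule p d K"
  obtains A where "finite A" "A \<subseteq> K" "\<And>K'. lamp_submodule p d K' \<Longrightarrow> A \<subseteq> K' \<Longrightarrow> K \<subseteq> K'"
proof -
  obtain M where M: "\<And>m. M \<le> m \<Longrightarrow> leading_blocks d K m = leading_blocks d K M"
    using increasing_chain_in_finite_stabilizes[of "leading_blocks d K" "lamp_window n p d",
        OF leading_blocks_mono[OF K(3) less_imp_le[OF K(2)]] leading_blocks_subset_window[OF K(1)]
        finite_lamp_window] by blast
  define A where "A = {f \<in> K. supported_below (d * int (Suc M)) f}"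
  have "A \<subseteq> lamp_window n p (d * int (Suc M))"
    using K(1) by (auto simp: A_def lamp_window_def)
  then have "finite A"
    using finite_lamp_window finite_subset by blast
  moreover have "K \<subseteq> K'" if K': "lamp_submodule p d K'" "A \<subseteq> K'" for K'
  proof
    fix f assume f: "f \<in> K"
    obtain t where t: "\<forall>k i. f k i \<noteq> 0 \<longrightarrow> \<bar>k\<bar> < int t"
      using lamp_configs_bounded_support f K(1) by blast
    have "lamp_shift (d * int t) f \<in> K"
      using lamp_submodule_shift_mult[OF K(3) f] .
    moreover have "int t \<le> d * int t"
      using K(2) by (simp add: mult_le_cancel_right1)
    then have "supported_below (2 * (d * int t)) (lamp_shift (d * int t) f)"
      by (rule supported_below_shift_bounded[OF t])
    then have "supported_below (d * int (2 * t)) (lamp_shift (d * int t) f)"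
      by (simp add: algebra_simps)
    ultimately have "lamp_shift (d * int t) f \<in> K'"
      using lamp_submodule_supported_subset[OF K M K'(1) K'(2)[unfolded A_def]] by blast
    then have "lamp_shift (d * - int t) (lamp_shift (d * int t) f) \<in> K'"
      by (rule lamp_submodule_shift_mult[OF K'(1)])
    then show "f \<in> K'"
      by simp
  qed
  ultimately show ?thesis
    using that by (auto simp: A_def)
qed

lemma countable_lamp_configs: "countable (lamp_configs n p)"
proof -
  have "lamp_configs n p \<subseteq> (\<Union>t. lamp_shift (- int t) ` lamp_window n p (2 * int t))"
  proof
    fix f assume f: "f \<in> lamp_configs n p"
    obtain t where t: "\<forall>k i. f k i \<noteq> 0 \<longrightarrow> \<bar>k\<bar> < int t"
      using lamp_configs_bounded_support f by blast
    have "lamp_shift (int t) f \<in> lamp_window n p (2 * int t)"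
      using supported_below_shift_bounded[OF t] f by (simp add: lamp_window_def lamp_shift_closed)
    moreover have "f = lamp_shift (- int t) (lamp_shift (int t) f)"
      by simp
    ultimately show "f \<in> (\<Union>t. lamp_shift (- int t) ` lamp_window n p (2 * int t))"
      by blast
  qed
  moreover have "countable (\<Union>t. lamp_shift (- int t) ` lamp_window n p (2 * int t))"
    by (rule countable_UN) (simp_all add: countable_finite finite_lamp_window)
  ultimately show ?thesis
    by (rule countable_subset)
qed

lemma subgroup_lamplighter_finitely_generated:
  assumes p: "p > 0" and V: "subgroup V (lamplighter n p)" and pos: "pi1 V > 0"
  obtains S where "finite S" "S \<subseteq> carrier (lamplighter n p)" "V = generate (lamplighter n p) S"
proof -
  interpret group "lamplighter n p" by (rule group_lamplighter[OF p])
  obtain h where h: "h \<in> V" "snd h = int (pi1 V)"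
    using image_snd_subgroup_lamplighter[OF p V] by (metis (mono_tags) imageE mem_Collect_eq mult.right_neutral)
  have "lamps_of V \<subseteq> lamp_configs n p"
    using subgroup.subset[OF V] by (auto simp: lamps_of_def carrier_lamplighter)
  then obtain A where A: "finite A" "A \<subseteq> lamps_of V"
    and generates: "\<And>K'. lamp_submodule p (int (pi1 V)) K' \<Longrightarrow> A \<subseteq> K' \<Longrightarrow> lamps_of V \<subseteq> K'"
    using lamp_submodule_finitely_generated lamp_submodule_lamps_of[OF p V h] pos by (metis of_nat_0_less_iff)
  define S where "S = insert h ((\<lambda>f. (f, 0)) ` A)"
  have "S \<subseteq> V"
    using A(2) h(1) by (auto simp: S_def lamps_of_def)
  then have S: "S \<subseteq> carrier (lamplighter n p)"
    using subgroup.subset[OF V] by blast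
  have W: "subgroup (generate (lamplighter n p) S) (lamplighter n p)"
    using generate_is_subgroup[OF S] .
  have hW: "h \<in> generate (lamplighter n p) S"
    by (rule generate.incl) (simp add: S_def)
  have "A \<subseteq> lamps_of (generate (lamplighter n p) S)"
    by (auto simp: S_def lamps_of_def intro: generate.incl)
  then have "lamps_of V \<subseteq> lamps_of (generate (lamplighter n p) S)"
    by (rule generates[OF lamp_submodule_lamps_of[OF p W hW h(2)]])
  then have "V \<subseteq> generate (lamplighter n p) S"
    using subgroup_lamplighter_subsetI[OF p V W h(1) hW h(2)] by blast
  moreover have "generate (lamplighter n p) S \<subseteq> V"
    using generate_subgroup_incl[OF \<open>S \<subseteq> V\<close> V] .
  moreover have "finite S"
    using A(1) by (simp add: S_def)
  ultimately show ?thesis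
    using that S by blast
qed

theorem lemma2p2:
  fixes n p :: nat
  assumes "prime p" and "n \<ge> 1"
  shows "countable {V. subgroup V (lamplighter n p) \<and> pi1 V > 0}"
proof -
  have p: "p > 0"
    using assms(1) by (rule prime_gt_0_nat)
  have "{V. subgroup V (lamplighter n p) \<and> pi1 V > 0}
        \<subseteq> generate (lamplighter n p) ` {S. finite S \<and> S \<subseteq> carrier (lamplighter n p)}"
    using subgroup_lamplighter_finitely_generated[OF p] by blast
  moreover have "countable (carrier (lamplighter n p))"
    by (simp add: carrier_lamplighter countable_lamp_configs)
  then have "countable (generate (lamplighter n p) ` {S. finite S \<and> S \<subseteq> carrier (lamplighter n p)})"
    by (intro countable_image countable_Collect_finite_subset)
  ultimately show ?thesis
    by (rule countable_subset)
qed

end
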